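(* Under the setting below, suppose the index sets of Algorithm BC satisfy the randomized sampling requirement. Then almost surely: (i) $\sum_k\|\bm x^k-\bm z^k\|^2<\infty$ (in particular $\|\bm x^k-\bm z^k\|\to0$); (ii) $\Phi(\bm z^k)\to\Phi_\star$, where $\Phi_\star:=\lim_k\Phi^{\mathrm{FB}}_\Gamma(\bm x^k)$ (a finite limit with $\Phi_\star\ge\min\Phi$); (iii) $(\bm x^k)$ and $(\bm z^k)$ have the same cluster points, every such cluster point $\bm x^\star$ satisfies $0\in\hat\partial\Phi(\bm x^\star)$, and $\Phi(\bm x^\star)=\Phi^{\mathrm{FB}}_\Gamma(\bm x^\star)=\Phi_\star$.
   Context: Setting: $N\ge1$, $n=\sum_{i=1}^N n_i$, $\bm x=(x_1,\dots,x_N)$ with $x_i\in\mathbb R^{n_i}$; $\Phi=F+G$ with $F(\bm x)=\frac1N\sum_i f_i(x_i)$, each $f_i:\mathbb R^{n_i}\to\mathbb R$ differentiable with $L_{f_i}$-Lipschitz gradient, $G:\mathbb R^n\to\mathbb R\cup\{+\infty\}$ proper lsc, $\arg\min\Phi\ne\emptyset$. $\gamma_i\in(0,N/L_{f_i})$, $\Gamma=\operatorname{blockdiag}(\gamma_1I_{n_1},\dots,\gamma_NI_{n_N})$, $\|x\|_V^2=\langle x,Vx\rangle$, $\operatorname{prox}_G^{V}(u)=\arg\min_w\{G(w)+\frac12\|w-u\|_V^2\}$, $\mathbf T(\bm x)=\operatorname{prox}_G^{\Gamma^{-1}}(\bm x-\Gamma\nabla F(\bm x))$. Forward-backward envelope: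 $\Phi^{\mathrm{FB}}_\Gamma(\bm x):=\inf_{\bm w}\{F(\bm x)+\langle\nabla F(\bm x),\bm w-\bm x\rangle+G(\bm w)+\frac12\|\bm w-\bm x\|^2_{\Gamma^{-1}}\}$. Algorithm BC: given $\bm x^0\in\mathbb R^n$, for $k=0,1,\dots$: pick $\bm z^k\in\mathbf T(\bm x^k)$; select $I^{k+1}\subseteq[N]$; set $x_i^{k+1}=z_i^k$ for $i\in I^{k+1}$ and $x_i^{k+1}=x_i^k$ otherwise. Randomized sampling requirement: there exist $p_1,\dots,p_N>0$ such that at every iteration, conditionally on the past, $\mathbb P(i\in I^{k+1})\ge p_i$ for every $i\in[N]$ (several indices may be selected at once; the $p_i$ need not sum to one). $\hat\partial$ denotes the regular (Fréchet) subdifferential. *)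

theory Defs
  imports "HOL-Analysis.Analysis" "HOL-Probability.Probability"
begin

text \<open>Block structure: coordinates of type 'n, blocks of type 'b (N = CARD('b)),
  the block of coordinate j is blk j.  Step sizes gam :: 'b => real give
  Gamma = blockdiag(gam_1 I, ..., gam_N I).\<close>

definition blk_proj :: "('n \<Rightarrow> 'b) \<Rightarrow> 'b \<Rightarrow> real^'n \<Rightarrow> real^'n" where
  "blk_proj blk i x = (\<chi> j. if blk j = i then x $ j else 0)"

definition Gam_mul :: "('n::finite \<Rightarrow> 'b) \<Rightarrow> ('b \<Rightarrow> real) \<Rightarrow> real^'n \<Rightarrow> real^'n" where
  "Gam_mul blk gam v = (\<chi> j. gam (blk j) * v $ j)"

definition Gam_inv_norm2 :: "('n::finite \<Rightarrow> 'b) \<Rightarrow> ('b \<Rightarrow> real) \<Rightarrow> real^'n \<Rightarrow> real" where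
  "Gam_inv_norm2 blk gam w = (\<Sum>j\<in>UNIV. (w $ j)^2 / gam (blk j))"

definition Fsep :: "('b::finite \<Rightarrow> real^'n \<Rightarrow> real) \<Rightarrow> real^'n \<Rightarrow> real" where
  "Fsep f x = (\<Sum>i\<in>UNIV. f i x) / real CARD('b)"

definition gradFsep :: "('b::finite \<Rightarrow> real^'n \<Rightarrow> real^'n) \<Rightarrow> real^'n \<Rightarrow> real^'n" where
  "gradFsep g x = (1 / real CARD('b)) *\<^sub>R (\<Sum>i\<in>UNIV. g i x)"

text \<open>prox_G^{Gamma^{-1}}(u) as a (possibly empty / multivalued) argmin set.\<close>
definition prox_set :: "(real^'n::finite \<Rightarrow> ereal) \<Rightarrow> ('n \<Rightarrow> 'b) \<Rightarrow> ('b \<Rightarrow> real)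
    \<Rightarrow> real^'n \<Rightarrow> (real^'n) set" where
  "prox_set G blk gam u =
     {w. \<forall>v. G w + ereal (Gam_inv_norm2 blk gam (w - u) / 2)
              \<le> G v + ereal (Gam_inv_norm2 blk gam (v - u) / 2)}"

definition Tmap :: "('b::finite \<Rightarrow> real^'n::finite \<Rightarrow> real^'n) \<Rightarrow> (real^'n \<Rightarrow> ereal)
    \<Rightarrow> ('n \<Rightarrow> 'b) \<Rightarrow> ('b \<Rightarrow> real) \<Rightarrow> real^'n \<Rightarrow> (real^'n) set" where
  "Tmap g G blk gam x = prox_set G blk gam (x - Gam_mul blk gam (gradFsep g x))"

definition FBE :: "('b::finite \<Rightarrow> real^'n::finite \<Rightarrow> real) \<Rightarrow> ('b \<Rightarrow> real^'n \<Rightarrow> real^'n)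
    \<Rightarrow> (real^'n \<Rightarrow> ereal) \<Rightarrow> ('n \<Rightarrow> 'b) \<Rightarrow> ('b \<Rightarrow> real) \<Rightarrow> real^'n \<Rightarrow> ereal" where
  "FBE f g G blk gam x =
     (INF w. ereal (Fsep f x + inner (gradFsep g x) (w - x) + Gam_inv_norm2 blk gam (w - x) / 2) + G w)"

definition lsc :: "('a::topological_space \<Rightarrow> ereal) \<Rightarrow> bool" where
  "lsc G \<longleftrightarrow> (\<forall>x. G x \<le> Liminf (at x) G)"

definition frechet_subdiff :: "('a::real_inner \<Rightarrow> ereal) \<Rightarrow> 'a \<Rightarrow> 'a set" where
  "frechet_subdiff P x =
     {v. \<bar>P x\<bar> \<noteq> \<infinity> \<and>
         (\<forall>e>0. \<exists>d>0. \<forall>y. norm (y - x) < d \<longrightarrow>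
              P x + ereal (inner v (y - x) - e * norm (y - x)) \<le> P y)}"

definition cluster_points :: "(nat \<Rightarrow> 'a::topological_space) \<Rightarrow> 'a set" where
  "cluster_points s = {a. \<exists>r. strict_mono r \<and> (s \<circ> r) \<longlonglongrightarrow> a}"

end

theory Submission
  imports Defs
begin

(*
  The forward-backward envelope is a Lyapunov function along every sample path: by the block
  descent lemma and the prox optimality of z^k, updating the blocks in I^{k+1} lowers it by at
  least c * sum_{i in I^{k+1}} ||x_i^k - z_i^k||^2, and it is bounded below by min Phi. Hence the
  sampled residuals have partial sums bounded uniformly over all paths. Since every block is sampled
  with conditional probability at least p_i, integrating turns this into a bound on the
  expectation of sum_k ||x^k - z^k||^2, which is therefore finite almost surely. On such a path
  Phi(z^k) is squeezed between the envelope and the envelope minus a multiple of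
  ||x^k - z^k||^2, and cluster points are fixed points of T by closedness of the graph of the
  proximal map, hence critical points of Phi.
*)

lemma remainder_bound_of_lipschitz_derivative:
  fixes \<phi> \<phi>' :: "real \<Rightarrow> real"
  assumes deriv: "\<And>t. 0 \<le> t \<Longrightarrow> t \<le> 1 \<Longrightarrow> (\<phi> has_real_derivative \<phi>' t) (at t)"
    and lip: "\<And>t. 0 \<le> t \<Longrightarrow> t \<le> 1 \<Longrightarrow> \<bar>\<phi>' t - \<phi>' 0\<bar> \<le> c * t"
  shows "\<bar>\<phi> 1 - \<phi> 0 - \<phi>' 0\<bar> \<le> c / 2"
proof -
  let ?up = "\<lambda>t. \<phi> t - t * \<phi>' 0 - c / 2 * t\<^sup>2" and ?lo = "\<lambda>t. \<phi> t - t * \<phi>' 0 + c / 2 * t\<^sup>2"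
  have "?up 1 \<le> ?up 0"
  proof (rule DERIV_nonpos_imp_nonincreasing[of 0 1 ?up])
    fix t :: real assume t: "0 \<le> t" "t \<le> 1"
    have "(?up has_real_derivative \<phi>' t - \<phi>' 0 - c * t) (at t)"
      by (auto intro!: derivative_eq_intros deriv[OF t])
    moreover have "\<phi>' t - \<phi>' 0 - c * t \<le> 0"
      using lip[OF t] by linarith
    ultimately show "\<exists>y. (?up has_real_derivative y) (at t) \<and> y \<le> 0" by blast
  qed simp
  moreover have "?lo 0 \<le> ?lo 1"
  proof (rule DERIV_nonneg_imp_nondecreasing[of 0 1 ?lo])
    fix t :: real assume t: "0 \<le> t" "t \<le> 1"
    have "(?lo has_real_derivative \<phi>' t - \<phi>' 0 + c * t) (at t)"
      by (auto intro!: derivative_eq_intros deriv[OF t])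
    moreover have "0 \<le> \<phi>' t - \<phi>' 0 + c * t"
      using lip[OF t] by linarith
    ultimately show "\<exists>y. (?lo has_real_derivative y) (at t) \<and> 0 \<le> y" by blast
  qed simp
  ultimately have "\<phi> 1 - \<phi>' 0 - c / 2 \<le> \<phi> 0" "\<phi> 0 \<le> \<phi> 1 - \<phi>' 0 + c / 2"
    by simp_all
  then show ?thesis
    unfolding abs_le_iff by linarith
qed

lemma blk_proj_nth: "blk_proj blk i x $ j = (if blk j = i then x $ j else 0)"
  by (simp add: blk_proj_def)

lemma linear_blk_proj: "linear (blk_proj blk i)"
  by (rule linearI) (simp_all add: vec_eq_iff blk_proj_nth)

lemma blk_proj_idem: "blk_proj blk i (blk_proj blk i u) = blk_proj blk i u"
  by (simp add: vec_eq_iff blk_proj_nth)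

lemma power2_norm_vec: "(norm (v::real^'n))\<^sup>2 = (\<Sum>j\<in>UNIV. (v $ j)\<^sup>2)"
  unfolding power2_norm_eq_inner inner_vec_def by (simp add: power2_eq_square)

lemma sum_over_blocks:
  fixes h :: "'b::finite \<Rightarrow> 'n::finite \<Rightarrow> real"
  shows "(\<Sum>i\<in>UNIV. \<Sum>j\<in>UNIV. if blk j = i then h i j else 0) = (\<Sum>j\<in>UNIV. h (blk j) j)"
  by (subst sum.swap) (simp add: sum.delta')

lemma sum_power2_norm_blk_proj:
  fixes v :: "real^'n::finite" and S :: "'b::finite set"
  shows "(\<Sum>i\<in>S. (norm (blk_proj blk i v))\<^sup>2) = (\<Sum>j\<in>UNIV. if blk j \<in> S then (v $ j)\<^sup>2 else 0)"
proof -
  have "(\<Sum>i\<in>S. (norm (blk_proj blk i v))\<^sup>2) = (\<Sum>i\<in>S. \<Sum>j\<in>UNIV. if blk j = i then (v $ j)\<^sup>2 else 0)"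
    by (simp add: power2_norm_vec blk_proj_nth if_distrib[of power2] cong: if_cong)
  also have "\<dots> = (\<Sum>j\<in>UNIV. \<Sum>i\<in>S. if blk j = i then (v $ j)\<^sup>2 else 0)"
    by (rule sum.swap)
  also have "\<dots> = (\<Sum>j\<in>UNIV. if blk j \<in> S then (v $ j)\<^sup>2 else 0)"
    by (simp add: sum.delta)
  finally show ?thesis .
qed

lemma sum_power2_norm_blk_proj_UNIV:
  fixes v :: "real^'n::finite"
  shows "(\<Sum>i\<in>(UNIV :: 'b::finite set). (norm (blk_proj blk i v))\<^sup>2) = (norm v)\<^sup>2"
  by (subst sum_power2_norm_blk_proj) (simp add: power2_norm_vec)

lemma norm_blk_proj_le: "norm (blk_proj blk i (u::real^'n)) \<le> norm u"
proof -
  have "(norm (blk_proj blk i u))\<^sup>2 \<le> (norm u)\<^sup>2"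
    unfolding power2_norm_vec by (rule sum_mono) (simp add: blk_proj_nth)
  then show ?thesis by (rule power2_le_imp_le) simp
qed

locale block_smooth =
  fixes blk :: "'n::finite \<Rightarrow> 'b::finite"
    and f :: "'b \<Rightarrow> real^'n \<Rightarrow> real"
    and g :: "'b \<Rightarrow> real^'n \<Rightarrow> real^'n"
    and L :: "'b \<Rightarrow> real"
  assumes f_block: "\<And>i u v. blk_proj blk i u = blk_proj blk i v \<Longrightarrow> f i u = f i v"
    and f_grad: "\<And>i u. GDERIV (f i) u :> g i u"
    and L_nonneg: "\<And>i. 0 \<le> L i"
    and f_Lip: "\<And>i u v. norm (g i u - g i v) \<le> L i * norm (blk_proj blk i u - blk_proj blk i v)"
begin

lemma has_real_derivative_along_line:
  "((\<lambda>t. f i (a + t *\<^sub>R e)) has_real_derivative inner (g i (a + t *\<^sub>R e)) e) (at t)"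
proof -
  have line: "((\<lambda>t. a + t *\<^sub>R e) has_derivative (\<lambda>h. h *\<^sub>R e)) (at t)"
    by (auto intro!: derivative_eq_intros)
  have "(f i has_derivative (\<lambda>h. inner h (g i (a + t *\<^sub>R e)))) (at (a + t *\<^sub>R e))"
    using f_grad by (simp add: gderiv_def)
  from has_derivative_compose[OF line this] show ?thesis
    by (simp add: has_field_derivative_def inner_commute mult.commute[of _ "inner e _"])
qed

lemma partial_gradient_off_block: "blk j \<noteq> i \<Longrightarrow> g i u $ j = 0"
proof -
  assume "blk j \<noteq> i"
  let ?e = "axis j (1::real)"
  \<comment> \<open>f i is constant along coordinate j, so its derivative in direction e_j vanishes\<close>
  have "blk_proj blk i (u + t *\<^sub>R ?e) = blk_proj blk i u" for t
    using \<open>blk j \<noteq> i\<close> by (simp add: vec_eq_iff blk_proj_nth axis_def)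
  then have "f i (u + t *\<^sub>R ?e) = f i u" for t
    by (rule f_block)
  then have "((\<lambda>t. f i u) has_real_derivative inner (g i u) ?e) (at 0)"
    using has_real_derivative_along_line[of i u ?e 0] by simp
  then have "inner (g i u) ?e = 0"
    using DERIV_const by (rule DERIV_unique)
  then show ?thesis by (simp add: inner_axis)
qed

lemma gradient_lipschitz: "norm (g i u - g i v) \<le> L i * norm (u - v)"
proof -
  have "norm (blk_proj blk i u - blk_proj blk i v) \<le> norm (u - v)"
    using norm_blk_proj_le[of blk i "u - v"] linear_diff[OF linear_blk_proj] by metis
  then show ?thesis
    using f_Lip[of i u v] L_nonneg[of i] by (meson mult_left_mono order.trans)
qed

lemma block_descent:
  assumes "blk_proj blk i e = e"
  shows "\<bar>f i (a + e) - f i a - inner (g i a) e\<bar> \<le> L i / 2 * (norm e)\<^sup>2"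
proof -
  have "\<bar>inner (g i (a + t *\<^sub>R e)) e - inner (g i a) e\<bar> \<le> L i * (norm e)\<^sup>2 * t" if "0 \<le> t" for t
  proof -
    have "\<bar>inner (g i (a + t *\<^sub>R e)) e - inner (g i a) e\<bar> \<le> norm (g i (a + t *\<^sub>R e) - g i a) * norm e"
      by (metis Cauchy_Schwarz_ineq2 inner_diff_left)
    also have "\<dots> \<le> L i * norm (blk_proj blk i (a + t *\<^sub>R e) - blk_proj blk i a) * norm e"
      by (rule mult_right_mono[OF f_Lip]) simp
    also have "blk_proj blk i (a + t *\<^sub>R e) - blk_proj blk i a = t *\<^sub>R e"
      using assms linear_blk_proj[of blk i] by (simp add: linear_add linear_scale)
    finally show ?thesis
      using that by (simp add: power2_eq_square mult_ac)
  qed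
  then show ?thesis
    using remainder_bound_of_lipschitz_derivative[of "\<lambda>t. f i (a + t *\<^sub>R e)" "\<lambda>t. inner (g i (a + t *\<^sub>R e)) e"]
    by (simp add: has_real_derivative_along_line)
qed

lemma gradFsep_nth: "gradFsep g x $ j = g (blk j) x $ j / real CARD('b)"
proof -
  have "(\<Sum>i\<in>UNIV. g i x $ j) = (\<Sum>i\<in>UNIV. if i = blk j then g (blk j) x $ j else 0)"
    by (rule sum.cong) (auto simp: partial_gradient_off_block)
  then show ?thesis by (simp add: gradFsep_def sum_component)
qed

lemma gradFsep_eq_if_block_eq:
  assumes "blk_proj blk (blk j) x' = blk_proj blk (blk j) x"
  shows "gradFsep g x' $ j = gradFsep g x $ j"
  using f_Lip[of "blk j" x' x] assms by (simp add: gradFsep_nth)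

lemma inner_gradFsep: "inner (gradFsep g x) d = (\<Sum>j\<in>UNIV. g (blk j) x $ j * d $ j) / real CARD('b)"
  by (simp add: inner_vec_def gradFsep_nth sum_divide_distrib)

lemma Fsep_descent:
  "\<bar>Fsep f (x + d) - Fsep f x - inner (gradFsep g x) d\<bar>
     \<le> (\<Sum>j\<in>UNIV. L (blk j) / (2 * real CARD('b)) * (d $ j)\<^sup>2)"
proof -
  let ?err = "\<lambda>i. f i (x + blk_proj blk i d) - f i x - inner (g i x) (blk_proj blk i d)"
  have f_incr: "f i (x + d) = f i (x + blk_proj blk i d)" for i
    by (rule f_block) (simp add: linear_add[OF linear_blk_proj] blk_proj_idem)
  have "(\<Sum>i\<in>UNIV. inner (g i x) (blk_proj blk i d))
      = (\<Sum>i\<in>UNIV. \<Sum>j\<in>UNIV. if blk j = i then g i x $ j * d $ j else 0)"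
    by (simp add: inner_vec_def blk_proj_nth if_distrib cong: if_cong)
  then have "Fsep f (x + d) - Fsep f x - inner (gradFsep g x) d = (\<Sum>i\<in>UNIV. ?err i) / real CARD('b)"
    by (simp add: Fsep_def inner_gradFsep f_incr sum_subtractf sum_over_blocks diff_divide_distrib)
  then have "\<bar>Fsep f (x + d) - Fsep f x - inner (gradFsep g x) d\<bar> \<le> (\<Sum>i\<in>UNIV. \<bar>?err i\<bar>) / real CARD('b)"
    by (simp add: divide_right_mono sum_abs)
  also have "\<dots> \<le> (\<Sum>i\<in>UNIV. L i / 2 * (norm (blk_proj blk i d))\<^sup>2) / real CARD('b)"
    by (intro divide_right_mono sum_mono block_descent) (auto simp: blk_proj_idem)
  also have "(\<Sum>i\<in>UNIV. L i / 2 * (norm (blk_proj blk i d))\<^sup>2)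
      = (\<Sum>i\<in>UNIV. \<Sum>j\<in>UNIV. if blk j = i then L i / 2 * (d $ j)\<^sup>2 else 0)"
    by (auto simp: power2_norm_vec blk_proj_nth sum_distrib_left intro!: sum.cong)
  finally show ?thesis
    by (simp add: sum_over_blocks sum_divide_distrib)
qed

lemma tendsto_gradFsep: "s \<longlonglongrightarrow> a \<Longrightarrow> (\<lambda>n. gradFsep g (s n)) \<longlonglongrightarrow> gradFsep g a"
proof -
  have "continuous_on UNIV (g i)" for i
    by (rule lipschitz_on_continuous_on[of "L i"]) (simp add: lipschitz_on_def L_nonneg gradient_lipschitz dist_norm)
  then have "isCont (g i) x" for i x
    by (simp add: continuous_on_eq_continuous_at)
  then show "s \<longlonglongrightarrow> a \<Longrightarrow> (\<lambda>n. gradFsep g (s n)) \<longlonglongrightarrow> gradFsep g a"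
    unfolding gradFsep_def by (intro tendsto_intros) (auto intro: isCont_tendsto_compose)
qed

lemma tendsto_Fsep: "s \<longlonglongrightarrow> a \<Longrightarrow> (\<lambda>n. Fsep f (s n)) \<longlonglongrightarrow> Fsep f a"
proof -
  have "isCont (f i) a" for i
    using f_grad[of i a] by (intro has_derivative_continuous) (simp add: gderiv_def)
  then show "s \<longlonglongrightarrow> a \<Longrightarrow> (\<lambda>n. Fsep f (s n)) \<longlonglongrightarrow> Fsep f a"
    unfolding Fsep_def by (intro tendsto_intros) (auto intro: isCont_tendsto_compose)
qed

end

lemma lsc_imp_eventually_greater:
  assumes "lsc G" and "s \<longlonglongrightarrow> a" and "c < G a"
  shows "eventually (\<lambda>n. c < G (s n)) sequentially"
proof -
  have "c < Liminf (at a) G"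
    using assms(1,3) unfolding lsc_def by (meson order.strict_trans2)
  then have "eventually (\<lambda>y. c < G y) (at a)"
    by (rule less_LiminfD)
  then have "eventually (\<lambda>y. c < G y) (nhds a)"
    using assms(3) by (auto simp: eventually_at_filter elim: eventually_mono)
  then show ?thesis
    using assms(2) by (rule eventually_compose_filterlim)
qed

locale block_fb = block_smooth blk f g L
  for blk :: "'n::finite \<Rightarrow> 'b::finite"
    and f :: "'b \<Rightarrow> real^'n \<Rightarrow> real"
    and g :: "'b \<Rightarrow> real^'n \<Rightarrow> real^'n"
    and L :: "'b \<Rightarrow> real" +
  fixes G :: "real^'n \<Rightarrow> ereal"
    and gam :: "'b \<Rightarrow> real"
  assumes G_proper: "(\<forall>y. G y \<noteq> -\<infinity>) \<and> (\<exists>y. G y \<noteq> \<infinity>)"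
    and G_lsc: "lsc G"
    and gam_pos: "\<And>i. 0 < gam i"
    and gam_bound: "\<And>i. gam i * L i < real CARD('b)"
begin

abbreviation T :: "real^'n \<Rightarrow> (real^'n) set" where
  "T \<equiv> Tmap g G blk gam"

abbreviation FB_env :: "real^'n \<Rightarrow> ereal" where
  "FB_env \<equiv> FBE f g G blk gam"

abbreviation gnorm2 :: "real^'n \<Rightarrow> real" where
  "gnorm2 \<equiv> Gam_inv_norm2 blk gam"

definition Phi :: "real^'n \<Rightarrow> ereal" where
  "Phi y = ereal (Fsep f y) + G y"

definition fb_model :: "real^'n \<Rightarrow> real^'n \<Rightarrow> real" where
  "fb_model x w = Fsep f x + inner (gradFsep g x) (w - x) + gnorm2 (w - x) / 2"

definition fb_center :: "real^'n \<Rightarrow> real^'n" where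
  "fb_center x = x - Gam_mul blk gam (gradFsep g x)"

lemma G_not_MInf [simp]: "G y \<noteq> -\<infinity>"
  using G_proper by blast

lemma Tmap_iff:
  "z \<in> T x \<longleftrightarrow>
     (\<forall>v. G z + ereal (gnorm2 (z - fb_center x) / 2) \<le> G v + ereal (gnorm2 (v - fb_center x) / 2))"
  by (simp add: Tmap_def prox_set_def fb_center_def)

lemma Gam_inv_norm2_fb_center:
  "gnorm2 (w - fb_center x)
     = gnorm2 (w - x) + 2 * inner (gradFsep g x) (w - x) + (\<Sum>j\<in>UNIV. gam (blk j) * (gradFsep g x $ j)\<^sup>2)"
proof -
  have "((w - fb_center x) $ j)\<^sup>2 / gam (blk j)
      = ((w - x) $ j)\<^sup>2 / gam (blk j) + 2 * (gradFsep g x $ j * (w - x) $ j) + gam (blk j) * (gradFsep g x $ j)\<^sup>2" for j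
    using gam_pos[of "blk j"] by (simp add: fb_center_def Gam_mul_def field_simps power2_eq_square)
  then show ?thesis
    unfolding Gam_inv_norm2_def inner_vec_def by (simp add: sum.distrib sum_distrib_left)
qed

text \<open>Up to a constant in w, the model is the proximal objective; this is why minimizing it is T.\<close>
lemma fb_model_eq_prox_objective:
  "fb_model x w = Fsep f x - (\<Sum>j\<in>UNIV. gam (blk j) * (gradFsep g x $ j)\<^sup>2) / 2 + gnorm2 (w - fb_center x) / 2"
  by (simp add: fb_model_def Gam_inv_norm2_fb_center field_simps)

lemma FBE_eq_INF_fb_model: "FB_env x = (INF w. ereal (fb_model x w) + G w)"
  by (simp add: FBE_def fb_model_def)

lemma FBE_le_fb_model: "FB_env x \<le> ereal (fb_model x w) + G w"
  unfolding FBE_eq_INF_fb_model by (rule INF_lower) simp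

lemma FBE_eq_fb_model:
  assumes "z \<in> T x"
  shows "FB_env x = ereal (fb_model x z) + G z"
proof (rule antisym)
  show "FB_env x \<le> ereal (fb_model x z) + G z"
    by (rule FBE_le_fb_model)
  show "ereal (fb_model x z) + G z \<le> FB_env x"
    unfolding FBE_eq_INF_fb_model
  proof (rule INF_greatest)
    fix w
    let ?c = "Fsep f x - (\<Sum>j\<in>UNIV. gam (blk j) * (gradFsep g x $ j)\<^sup>2) / 2"
    have "ereal (fb_model x z) + G z = ereal ?c + (G z + ereal (gnorm2 (z - fb_center x) / 2))"
      by (simp add: fb_model_eq_prox_objective add_ac)
    also have "\<dots> \<le> ereal ?c + (G w + ereal (gnorm2 (w - fb_center x) / 2))"
      using assms by (intro add_left_mono) (simp add: Tmap_iff)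
    also have "\<dots> = ereal (fb_model x w) + G w"
      by (simp add: fb_model_eq_prox_objective add_ac)
    finally show "ereal (fb_model x z) + G z \<le> ereal (fb_model x w) + G w" .
  qed
qed

lemma G_finite_on_Tmap:
  assumes "z \<in> T x"
  shows "G z \<noteq> \<infinity>"
proof -
  obtain y where "G y \<noteq> \<infinity>"
    using G_proper by blast
  moreover have "G z + ereal (gnorm2 (z - fb_center x) / 2) \<le> G y + ereal (gnorm2 (y - fb_center x) / 2)"
    using assms unfolding Tmap_iff by blast
  ultimately show ?thesis
    by auto
qed

definition decrease_const :: real where
  "decrease_const = Min (range (\<lambda>i. 1 / (2 * gam i) - L i / (2 * real CARD('b))))"

definition model_excess_const :: real where
  "model_excess_const = (\<Sum>i\<in>UNIV. L i / (2 * real CARD('b)) + 1 / (2 * gam i))"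

lemma descent_coeff_less: "L i / (2 * real CARD('b)) < 1 / (2 * gam i)"
  using gam_bound[of i] gam_pos[of i] by (simp add: field_simps)

lemma decrease_const_pos: "0 < decrease_const"
  unfolding decrease_const_def by (subst Min_gr_iff) (auto simp: descent_coeff_less)

lemma decrease_const_le: "decrease_const \<le> 1 / (2 * gam i) - L i / (2 * real CARD('b))"
  unfolding decrease_const_def by (rule Min_le) auto

lemma model_excess_const_ge: "L i / (2 * real CARD('b)) + 1 / (2 * gam i) \<le> model_excess_const"
  unfolding model_excess_const_def
  by (rule member_le_sum[where f = "\<lambda>i. L i / (2 * real CARD('b)) + 1 / (2 * gam i)"])
     (auto intro!: add_nonneg_nonneg simp: L_nonneg less_imp_le[OF gam_pos])

lemma model_excess_const_pos: "0 < model_excess_const"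
  using model_excess_const_ge[of undefined] L_nonneg[of undefined] gam_pos[of undefined]
  by (smt (verit) divide_nonneg_nonneg divide_pos_pos of_nat_0_le_iff)

lemma Gam_inv_norm2_half: "gnorm2 d / 2 = (\<Sum>j\<in>UNIV. 1 / (2 * gam (blk j)) * (d $ j)\<^sup>2)"
  by (simp add: Gam_inv_norm2_def sum_divide_distrib mult.commute)

lemma descent_plus_prox_term_le:
  "(\<Sum>j\<in>UNIV. L (blk j) / (2 * real CARD('b)) * (d $ j)\<^sup>2) + gnorm2 d / 2 \<le> model_excess_const * (norm d)\<^sup>2"
proof -
  have "(\<Sum>j\<in>UNIV. L (blk j) / (2 * real CARD('b)) * (d $ j)\<^sup>2) + gnorm2 d / 2
      = (\<Sum>j\<in>UNIV. (L (blk j) / (2 * real CARD('b)) + 1 / (2 * gam (blk j))) * (d $ j)\<^sup>2)"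
    by (simp add: Gam_inv_norm2_half sum.distrib[symmetric] distrib_right)
  also have "\<dots> \<le> (\<Sum>j\<in>UNIV. model_excess_const * (d $ j)\<^sup>2)"
    by (intro sum_mono mult_right_mono model_excess_const_ge) simp
  finally show ?thesis
    by (simp add: power2_norm_vec sum_distrib_left)
qed

lemma Fsep_le_fb_model: "Fsep f z \<le> fb_model x z"
proof -
  have "(\<Sum>j\<in>UNIV. L (blk j) / (2 * real CARD('b)) * ((z - x) $ j)\<^sup>2) \<le> gnorm2 (z - x) / 2"
    unfolding Gam_inv_norm2_half by (intro sum_mono mult_right_mono less_imp_le[OF descent_coeff_less]) simp
  then show ?thesis
    using Fsep_descent[of x "z - x"] by (simp add: fb_model_def abs_le_iff)
qed

lemma fb_model_le: "fb_model x z \<le> Fsep f z + model_excess_const * (norm (z - x))\<^sup>2"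
  using Fsep_descent[of x "z - x"] descent_plus_prox_term_le[of "z - x"]
  by (simp add: fb_model_def abs_le_iff)

lemma fb_model_self: "fb_model x x = Fsep f x"
  by (simp add: fb_model_def Gam_inv_norm2_def)

lemma Phi_le_FBE:
  assumes "z \<in> T x"
  shows "Phi z \<le> FB_env x"
  using FBE_eq_fb_model[OF assms] Fsep_le_fb_model[of z x] by (simp add: Phi_def add_right_mono)

text \<open>
  The descent lemma on the updated blocks, with the prox term of the unchanged blocks carried over,
  shows that moving the blocks in I from x to z lowers the model by a multiple of the block progress.\<close>
lemma fb_model_block_update:
  assumes x': "\<And>j. x' $ j = (if blk j \<in> I then z $ j else x $ j)"
  shows "fb_model x' z \<le> fb_model x z - decrease_const * (\<Sum>i\<in>I. (norm (blk_proj blk i (z - x)))\<^sup>2)"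
proof -
  define d :: "real^'n" where "d = (\<chi> j. if blk j \<in> I then z $ j - x $ j else 0)"
  let ?gx = "\<lambda>j. gradFsep g x $ j" and ?r = "\<lambda>j. z $ j - x $ j"
  have "x' = x + d"
    by (simp add: vec_eq_iff d_def x')
  then have F: "Fsep f x' \<le> Fsep f x + (\<Sum>j\<in>UNIV. ?gx j * d $ j + L (blk j) / (2 * real CARD('b)) * (d $ j)\<^sup>2)"
    using Fsep_descent[of x d] by (simp add: abs_le_iff inner_vec_def sum.distrib)
  have grad_kept: "gradFsep g x' $ j = ?gx j" if "blk j \<notin> I" for j
    using that by (intro gradFsep_eq_if_block_eq) (auto simp: vec_eq_iff blk_proj_nth x')
  have new: "fb_model x' z = Fsep f x' + (\<Sum>j\<in>UNIV. if blk j \<in> I then 0 else ?gx j * ?r j + (?r j)\<^sup>2 / gam (blk j) / 2)"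
    unfolding fb_model_def inner_vec_def Gam_inv_norm2_def sum_divide_distrib
    by (auto simp: x' grad_kept sum.distrib[symmetric] intro!: sum.cong)
  have old: "fb_model x z - decrease_const * (\<Sum>i\<in>I. (norm (blk_proj blk i (z - x)))\<^sup>2)
     = Fsep f x + (\<Sum>j\<in>UNIV. ?gx j * ?r j + (?r j)\<^sup>2 / gam (blk j) / 2
          - decrease_const * (if blk j \<in> I then (?r j)\<^sup>2 else 0))"
    by (simp add: fb_model_def sum_power2_norm_blk_proj inner_vec_def Gam_inv_norm2_def sum_divide_distrib
        sum_distrib_left sum.distrib sum_subtractf if_distrib[of "\<lambda>t. decrease_const * t"] cong: if_cong)
  have "(\<Sum>j\<in>UNIV. ?gx j * d $ j + L (blk j) / (2 * real CARD('b)) * (d $ j)\<^sup>2)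
       + (\<Sum>j\<in>UNIV. if blk j \<in> I then 0 else ?gx j * ?r j + (?r j)\<^sup>2 / gam (blk j) / 2)
     \<le> (\<Sum>j\<in>UNIV. ?gx j * ?r j + (?r j)\<^sup>2 / gam (blk j) / 2 - decrease_const * (if blk j \<in> I then (?r j)\<^sup>2 else 0))"
    unfolding sum.distrib[symmetric]
  proof (rule sum_mono)
    fix j
    have "decrease_const * (?r j)\<^sup>2 \<le> (1 / (2 * gam (blk j)) - L (blk j) / (2 * real CARD('b))) * (?r j)\<^sup>2"
      by (rule mult_right_mono[OF decrease_const_le]) simp
    then show "?gx j * d $ j + L (blk j) / (2 * real CARD('b)) * (d $ j)\<^sup>2
        + (if blk j \<in> I then 0 else ?gx j * ?r j + (?r j)\<^sup>2 / gam (blk j) / 2)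
        \<le> ?gx j * ?r j + (?r j)\<^sup>2 / gam (blk j) / 2 - decrease_const * (if blk j \<in> I then (?r j)\<^sup>2 else 0)"
      by (auto simp: d_def algebra_simps)
  qed
  then show ?thesis
    using F new old by linarith
qed

lemma tendsto_Gam_inv_norm2: "s \<longlonglongrightarrow> a \<Longrightarrow> (\<lambda>n. gnorm2 (s n)) \<longlonglongrightarrow> gnorm2 a"
  unfolding Gam_inv_norm2_def
  by (rule tendsto_sum, rule tendsto_divide[OF tendsto_power[OF tendsto_vec_nth] tendsto_const])
     (auto simp: less_imp_neq[OF gam_pos, symmetric])

lemma tendsto_fb_center:
  assumes "s \<longlonglongrightarrow> a"
  shows "(\<lambda>n. fb_center (s n)) \<longlonglongrightarrow> fb_center a"
proof -
  have "(\<lambda>n. Gam_mul blk gam (gradFsep g (s n))) \<longlonglongrightarrow> Gam_mul blk gam (gradFsep g a)"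
    unfolding Gam_mul_def
    by (rule vec_tendstoI) (simp, rule tendsto_mult[OF tendsto_const tendsto_vec_nth[OF tendsto_gradFsep[OF assms]]])
  then show ?thesis
    unfolding fb_center_def by (rule tendsto_diff[OF assms])
qed

lemma Tmap_limit:
  assumes s: "s \<longlonglongrightarrow> a" and t: "t \<longlonglongrightarrow> b" and T: "\<And>n. t n \<in> T (s n)"
  shows "(\<lambda>n. G (t n)) \<longlonglongrightarrow> G b" and "b \<in> T a"
proof -
  let ?prox = "\<lambda>v n. gnorm2 (v - fb_center (s n)) / 2"
  have prox_lim: "(\<lambda>n. gnorm2 (v n - fb_center (s n)) / 2) \<longlonglongrightarrow> gnorm2 (c - fb_center a) / 2" if "v \<longlonglongrightarrow> c" for v c
    using that s by (intro tendsto_intros tendsto_Gam_inv_norm2 tendsto_fb_center) auto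
  have prox_ineq: "G (t n) + ereal (?prox (t n) n) \<le> G v + ereal (?prox v n)" for n v
    using T[of n] unfolding Tmap_iff by blast
  show G_lim: "(\<lambda>n. G (t n)) \<longlonglongrightarrow> G b"
  proof (rule order_tendstoI)
    fix c assume "c < G b"
    then show "eventually (\<lambda>n. c < G (t n)) sequentially"
      using G_lsc t by (rule lsc_imp_eventually_greater[rotated 2])
  next
    fix c assume "G b < c"
    then obtain gb where gb: "G b = ereal gb"
      by (cases "G b") auto
    \<comment> \<open>comparing t n with the competitor b in the prox inequality\<close>
    have upper: "G (t n) \<le> ereal (gb + ?prox b n - ?prox (t n) n)" for n
      using prox_ineq[of n b] G_finite_on_Tmap[OF T[of n]] by (cases "G (t n)") (auto simp: gb)
    have "(\<lambda>n. ereal (gb + ?prox b n - ?prox (t n) n))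
        \<longlonglongrightarrow> ereal (gb + gnorm2 (b - fb_center a) / 2 - gnorm2 (b - fb_center a) / 2)"
      by (intro tendsto_ereal tendsto_add tendsto_diff tendsto_const prox_lim t)
    then have "eventually (\<lambda>n. ereal (gb + ?prox b n - ?prox (t n) n) < c) sequentially"
      using \<open>G b < c\<close> gb by (intro order_tendstoD(2)) auto
    then show "eventually (\<lambda>n. G (t n) < c) sequentially"
      by (rule eventually_mono) (use upper in \<open>rule le_less_trans\<close>)
  qed
  show "b \<in> T a"
    unfolding Tmap_iff
  proof
    fix v
    have "(\<lambda>n. G (t n) + ereal (?prox (t n) n)) \<longlonglongrightarrow> G b + ereal (gnorm2 (b - fb_center a) / 2)"
      using G_lim t by (intro tendsto_add_ereal_nonneg tendsto_ereal prox_lim) auto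
    moreover have "(\<lambda>n. G v + ereal (?prox v n)) \<longlonglongrightarrow> G v + ereal (gnorm2 (v - fb_center a) / 2)"
      by (intro tendsto_add_ereal_nonneg tendsto_ereal prox_lim tendsto_const) auto
    ultimately show "G b + ereal (gnorm2 (b - fb_center a) / 2) \<le> G v + ereal (gnorm2 (v - fb_center a) / 2)"
      using prox_ineq by (intro LIMSEQ_le) auto
  qed
qed

lemma FBE_eq_Phi_if_fixed: "x \<in> T x \<Longrightarrow> FB_env x = Phi x"
  using FBE_eq_fb_model by (simp add: fb_model_self Phi_def)

lemma Phi_le_if_fixed:
  assumes "x \<in> T x"
  shows "Phi x \<le> Phi y + ereal (model_excess_const * (norm (y - x))\<^sup>2)"
proof (cases "G y")
  case (real gy)
  obtain gx where gx: "G x = ereal gx"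
    using G_finite_on_Tmap[OF assms] by (cases "G x") auto
  let ?d = "y - x"
  have "G x + ereal (gnorm2 (x - fb_center x) / 2) \<le> G y + ereal (gnorm2 (y - fb_center x) / 2)"
    using assms unfolding Tmap_iff by blast
  moreover have "gnorm2 0 = 0"
    by (simp add: Gam_inv_norm2_def)
  ultimately have "gx \<le> gy + gnorm2 ?d / 2 + inner (gradFsep g x) ?d"
    by (simp add: gx real Gam_inv_norm2_fb_center field_simps)
  moreover have "Fsep f x \<le> Fsep f y - inner (gradFsep g x) ?d
      + (\<Sum>j\<in>UNIV. L (blk j) / (2 * real CARD('b)) * (?d $ j)\<^sup>2)"
    using Fsep_descent[of x ?d] by (simp add: abs_le_iff)
  ultimately have "Fsep f x + gx \<le> Fsep f y + gy + model_excess_const * (norm ?d)\<^sup>2"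
    using descent_plus_prox_term_le[of ?d] by linarith
  then show ?thesis
    by (simp add: Phi_def gx real)
next
  case PInf
  then have "Phi y = \<infinity>"
    by (simp add: Phi_def)
  then show ?thesis
    by simp
qed (use G_not_MInf in blast)

lemma zero_in_frechet_subdiff_if_fixed:
  assumes "x \<in> T x"
  shows "0 \<in> frechet_subdiff Phi x"
  unfolding frechet_subdiff_def
proof (intro CollectI conjI allI impI)
  show "\<bar>Phi x\<bar> \<noteq> \<infinity>"
    using G_finite_on_Tmap[OF assms] by (cases "G x") (auto simp: Phi_def)
  fix e :: real assume "0 < e"
  let ?K = model_excess_const
  have "Phi x + ereal (inner 0 (y - x) - e * norm (y - x)) \<le> Phi y" if "norm (y - x) < e / ?K" for y
  proof -
    have "?K * norm (y - x) \<le> e"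
      using that model_excess_const_pos by (simp add: field_simps)
    then have "?K * (norm (y - x))\<^sup>2 \<le> e * norm (y - x)"
      by (metis mult.assoc mult_right_mono norm_ge_zero power2_eq_square)
    then have "Phi x + ereal (- e * norm (y - x)) \<le> Phi y + ereal (?K * (norm (y - x))\<^sup>2 - e * norm (y - x))"
      using Phi_le_if_fixed[OF assms, of y] G_finite_on_Tmap[OF assms]
      by (cases "G x"; cases "G y") (auto simp: Phi_def)
    also have "\<dots> \<le> Phi y"
      using \<open>?K * (norm (y - x))\<^sup>2 \<le> e * norm (y - x)\<close> by (cases "Phi y") auto
    finally show ?thesis by simp
  qed
  then show "\<exists>d>0. \<forall>y. norm (y - x) < d \<longrightarrow> Phi x + ereal (inner 0 (y - x) - e * norm (y - x)) \<le> Phi y"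
    using \<open>0 < e\<close> model_excess_const_pos by (intro exI[of _ "e / ?K"]) auto
qed

end

lemma LIMSEQ_subseq_of_norm_diff_tendsto_zero:
  fixes x z :: "nat \<Rightarrow> 'a::real_normed_vector"
  assumes "(\<lambda>k. norm (x k - z k)) \<longlonglongrightarrow> 0" and "strict_mono r" and "(\<lambda>n. x (r n)) \<longlonglongrightarrow> a"
  shows "(\<lambda>n. z (r n)) \<longlonglongrightarrow> a"
proof -
  have "(\<lambda>n. norm (x (r n) - z (r n))) \<longlonglongrightarrow> 0"
    using LIMSEQ_subseq_LIMSEQ[OF assms(1,2)] by (simp add: o_def)
  then have "(\<lambda>n. x (r n) - (x (r n) - z (r n))) \<longlonglongrightarrow> a - 0"
    by (rule tendsto_diff[OF assms(3) tendsto_norm_zero_cancel])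
  then show ?thesis by simp
qed

lemma cluster_points_eq_of_norm_diff_tendsto_zero:
  fixes x z :: "nat \<Rightarrow> 'a::real_normed_vector"
  assumes "(\<lambda>k. norm (x k - z k)) \<longlonglongrightarrow> 0"
  shows "cluster_points x = cluster_points z"
proof -
  have "(\<lambda>k. norm (z k - x k)) \<longlonglongrightarrow> 0"
    using assms by (simp add: norm_minus_commute)
  with assms show ?thesis
    unfolding cluster_points_def o_def by (blast intro: LIMSEQ_subseq_of_norm_diff_tendsto_zero)
qed

locale bc_run = block_fb blk f g L G gam
  for blk :: "'n::finite \<Rightarrow> 'b::finite"
    and f :: "'b \<Rightarrow> real^'n \<Rightarrow> real"
    and g :: "'b \<Rightarrow> real^'n \<Rightarrow> real^'n"
    and L :: "'b \<Rightarrow> real"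
    and G :: "real^'n \<Rightarrow> ereal"
    and gam :: "'b \<Rightarrow> real" +
  fixes x z :: "nat \<Rightarrow> real^'n" and I :: "nat \<Rightarrow> 'b set" and y0 :: "real^'n"
  assumes z_in_T: "\<And>k. z k \<in> T (x k)"
    and x_update: "\<And>k j. x (Suc k) $ j = (if blk j \<in> I (Suc k) then z k $ j else x k $ j)"
    and y0_min: "\<And>u. Phi y0 \<le> Phi u"
begin

definition env :: "nat \<Rightarrow> real" where
  "env k = fb_model (x k) (z k) + real_of_ereal (G (z k))"

definition progress :: "nat \<Rightarrow> real" where
  "progress k = (\<Sum>i\<in>I (Suc k). (norm (blk_proj blk i (z k - x k)))\<^sup>2)"

definition Phi_min :: real where
  "Phi_min = real_of_ereal (Phi y0)"

lemma G_z_eq: "G (z k) = ereal (real_of_ereal (G (z k)))"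
  using G_finite_on_Tmap[OF z_in_T] by (cases "G (z k)") auto

lemma FBE_eq_env: "FB_env (x k) = ereal (env k)"
  using FBE_eq_fb_model[OF z_in_T] G_z_eq by (metis env_def plus_ereal.simps(1))

lemma Phi_y0: "Phi y0 = ereal Phi_min"
proof -
  have "Phi y0 \<le> Phi (z 0)"
    by (rule y0_min)
  then have "G y0 \<noteq> \<infinity>"
    using G_z_eq[of 0] by (auto simp: Phi_def)
  then show ?thesis
    by (cases "G y0") (auto simp: Phi_min_def Phi_def)
qed

lemma INF_Phi_eq: "(INF y. Phi y) = ereal Phi_min"
  by (metis Phi_y0 y0_min INF_lower UNIV_I INF_greatest antisym)

lemma Phi_min_le_env: "Phi_min \<le> env k"
proof -
  have "Phi y0 \<le> FB_env (x k)"
    using y0_min Phi_le_FBE[OF z_in_T] by (rule order_trans)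
  then show ?thesis
    by (simp add: Phi_y0 FBE_eq_env)
qed

lemma env_decrease: "env (Suc k) \<le> env k - decrease_const * progress k"
proof -
  have "ereal (env (Suc k)) \<le> ereal (fb_model (x (Suc k)) (z k)) + G (z k)"
    using FBE_le_fb_model by (simp add: FBE_eq_env[symmetric])
  then have "env (Suc k) \<le> fb_model (x (Suc k)) (z k) + real_of_ereal (G (z k))"
    by (subst (asm) G_z_eq) simp
  then show ?thesis
    using fb_model_block_update[OF x_update, of k] unfolding env_def progress_def by linarith
qed

lemma progress_nonneg: "0 \<le> progress k"
  unfolding progress_def by (rule sum_nonneg) simp

lemma sum_progress_le: "decrease_const * (\<Sum>k<n. progress k) \<le> env 0 - Phi_min"
proof -
  have "decrease_const * (\<Sum>k<n. progress k) \<le> env 0 - env n"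
  proof (induction n)
    case (Suc n)
    then show ?case
      using env_decrease[of n] by (simp add: distrib_left)
  qed simp
  then show ?thesis
    using Phi_min_le_env[of n] by linarith
qed

lemma env_converges: "env \<longlonglongrightarrow> (INF k. env k)" and Phi_min_le_INF_env: "Phi_min \<le> (INF k. env k)"
proof -
  have "decseq env"
    using env_decrease progress_nonneg decrease_const_pos
    by (intro decseq_SucI) (smt (verit) mult_nonneg_nonneg)
  moreover have "bdd_below (range env)"
    using Phi_min_le_env by (intro bdd_belowI) auto
  ultimately show "env \<longlonglongrightarrow> (INF k. env k)"
    by (rule LIMSEQ_decseq_INF[rotated])
  show "Phi_min \<le> (INF k. env k)"
    by (rule cINF_greatest) (auto intro: Phi_min_le_env)
qed

lemma Phi_z_eq: "Phi (z k) = ereal (Fsep f (z k) + real_of_ereal (G (z k)))"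
  unfolding Phi_def by (subst G_z_eq) simp

lemma Phi_z_between_env:
  "env k - model_excess_const * (norm (z k - x k))\<^sup>2 \<le> real_of_ereal (Phi (z k))"
  "real_of_ereal (Phi (z k)) \<le> env k"
  using fb_model_le[of "x k" "z k"] Fsep_le_fb_model[of "z k" "x k"]
  by (simp_all add: env_def Phi_z_eq)

lemma cluster_point_fixed:
  assumes "(\<lambda>k. norm (x k - z k)) \<longlonglongrightarrow> 0" and "(\<lambda>k. Phi (z k)) \<longlonglongrightarrow> c" and "a \<in> cluster_points x"
  shows "a \<in> T a" and "Phi a = c"
proof -
  obtain r where r: "strict_mono r" "(\<lambda>n. x (r n)) \<longlonglongrightarrow> a"
    using assms(3) by (auto simp: cluster_points_def o_def)
  have zr: "(\<lambda>n. z (r n)) \<longlonglongrightarrow> a"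
    using assms(1) r by (rule LIMSEQ_subseq_of_norm_diff_tendsto_zero)
  show "a \<in> T a"
    using r(2) zr z_in_T by (rule Tmap_limit)
  have "(\<lambda>n. Phi (z (r n))) \<longlonglongrightarrow> Phi a"
    unfolding Phi_def
    by (intro tendsto_add_ereal_nonneg tendsto_ereal tendsto_Fsep zr Tmap_limit(1)[OF r(2) zr z_in_T]) auto
  moreover have "(\<lambda>n. Phi (z (r n))) \<longlonglongrightarrow> c"
    using LIMSEQ_subseq_LIMSEQ[OF assms(2) r(1)] by (simp add: o_def)
  ultimately show "Phi a = c"
    by (rule LIMSEQ_unique)
qed

theorem convergence_of_summable_residuals:
  assumes "summable (\<lambda>k. (norm (x k - z k))\<^sup>2)"
  shows "(\<lambda>k. norm (x k - z k)) \<longlonglongrightarrow> 0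
    \<and> (\<exists>Phi_star :: real.
          (\<lambda>k. FB_env (x k)) \<longlonglongrightarrow> ereal Phi_star
        \<and> (INF y. Phi y) \<le> ereal Phi_star
        \<and> (\<lambda>k. Phi (z k)) \<longlonglongrightarrow> ereal Phi_star
        \<and> cluster_points x = cluster_points z
        \<and> (\<forall>a \<in> cluster_points x.
             0 \<in> frechet_subdiff Phi a \<and> Phi a = FB_env a \<and> FB_env a = ereal Phi_star))"
proof -
  define Phi_star where "Phi_star = (INF k. env k)"
  have "(\<lambda>k. sqrt ((norm (x k - z k))\<^sup>2)) \<longlonglongrightarrow> sqrt 0"
    using summable_LIMSEQ_zero[OF assms] by (rule tendsto_real_sqrt)
  then have dist_lim: "(\<lambda>k. norm (x k - z k)) \<longlonglongrightarrow> 0"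
    by simp
  have "(\<lambda>k. norm (z k - x k)) \<longlonglongrightarrow> 0"
    using dist_lim by (simp add: norm_minus_commute)
  then have "(\<lambda>k. env k - model_excess_const * (norm (z k - x k))\<^sup>2) \<longlonglongrightarrow> Phi_star - model_excess_const * 0\<^sup>2"
    unfolding Phi_star_def by (intro tendsto_diff tendsto_mult tendsto_const tendsto_power env_converges)
  then have "(\<lambda>k. env k - model_excess_const * (norm (z k - x k))\<^sup>2) \<longlonglongrightarrow> Phi_star"
    by simp
  then have "(\<lambda>k. real_of_ereal (Phi (z k))) \<longlonglongrightarrow> Phi_star"
    using env_converges unfolding Phi_star_def
    by (rule real_tendsto_sandwich[rotated 2]) (simp_all add: Phi_z_between_env)
  then have Phi_lim: "(\<lambda>k. Phi (z k)) \<longlonglongrightarrow> ereal Phi_star"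
    by (simp add: Phi_z_eq tendsto_ereal)
  have "(\<lambda>k. FB_env (x k)) \<longlonglongrightarrow> ereal Phi_star"
    unfolding FBE_eq_env Phi_star_def by (intro tendsto_ereal env_converges)
  moreover have "(INF y. Phi y) \<le> ereal Phi_star"
    using Phi_min_le_INF_env by (simp add: INF_Phi_eq Phi_star_def)
  moreover have "0 \<in> frechet_subdiff Phi a \<and> Phi a = FB_env a \<and> FB_env a = ereal Phi_star"
    if "a \<in> cluster_points x" for a
    using cluster_point_fixed[OF dist_lim Phi_lim that]
    by (simp add: zero_in_frechet_subdiff_if_fixed FBE_eq_Phi_if_fixed)
  ultimately show ?thesis
    using dist_lim Phi_lim cluster_points_eq_of_norm_diff_tendsto_zero[OF dist_lim] by blast
qed

end

lemma nn_integral_cmult_le_cond_prob: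
  fixes M F :: "'w measure" and H :: "'w \<Rightarrow> real"
  assumes "prob_space M" and sub: "subalgebra M F"
    and H: "H \<in> borel_measurable F" and A: "A \<in> sets M" and "0 < p"
    and prob_A: "AE w in M. p \<le> real_cond_exp M F (indicator A) w"
  shows "ennreal p * (\<integral>\<^sup>+ w. ennreal (H w) \<partial>M) \<le> (\<integral>\<^sup>+ w. ennreal (H w) * indicator A w \<partial>M)"
proof -
  interpret prob_space M by fact
  interpret finite_measure_subalgebra M F by unfold_locales (rule sub)
  have "AE w in M. ennreal p \<le> nn_cond_exp M F (\<lambda>x. ennreal (indicator A x)) w"
    using prob_A
  proof eventually_elim
    case (elim w)
    let ?c = "nn_cond_exp M F (\<lambda>x. ennreal (indicator A x)) w"
    \<comment> \<open>the negative part of the indicator vanishes, so the real conditional expectation is that of ?c\<close>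
    have "p \<le> enn2real ?c"
      using elim enn2real_nonneg[of "nn_cond_exp M F (\<lambda>x. ennreal (- indicator A x)) w"]
      unfolding real_cond_exp_def by linarith
    then show ?case
      using \<open>0 < p\<close> by (metis ennreal_enn2real ennreal_leI enn2real_top less_le_not_le top.not_eq_extremum)
  qed
  then have "ennreal p * (\<integral>\<^sup>+ w. ennreal (H w) \<partial>M)
      \<le> (\<integral>\<^sup>+ w. ennreal (H w) * nn_cond_exp M F (\<lambda>x. ennreal (indicator A x)) w \<partial>M)"
    using measurable_from_subalg[OF sub H]
    by (subst nn_integral_cmult[symmetric])
       (auto intro!: nn_integral_mono_AE elim!: eventually_mono simp: mult.commute[of "ennreal p"] mult_left_mono)
  also have "\<dots> = (\<integral>\<^sup>+ w. ennreal (H w) * indicator A w \<partial>M)"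
    using H A by (subst nn_cond_exp_intg) (auto simp: ennreal_indicator)
  finally show ?thesis .
qed

lemma suminf_sum_nn_integral_cmult_le:
  fixes X Y :: "nat \<Rightarrow> 'i \<Rightarrow> 'w \<Rightarrow> ennreal"
  assumes "finite S" and [measurable]: "\<And>k i. X k i \<in> borel_measurable M" "\<And>k i. Y k i \<in> borel_measurable M"
    and le: "\<And>k i. i \<in> S \<Longrightarrow> c * integral\<^sup>N M (X k i) \<le> integral\<^sup>N M (Y k i)"
  shows "c * (\<integral>\<^sup>+ w. (\<Sum>k. \<Sum>i\<in>S. X k i w) \<partial>M) \<le> (\<integral>\<^sup>+ w. (\<Sum>k. \<Sum>i\<in>S. Y k i w) \<partial>M)"
proof -
  have swap: "(\<integral>\<^sup>+ w. (\<Sum>k. \<Sum>i\<in>S. Z k i w) \<partial>M) = (\<Sum>k. \<Sum>i\<in>S. integral\<^sup>N M (Z k i))"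
    if [measurable]: "\<And>k i. Z k i \<in> borel_measurable M" for Z :: "nat \<Rightarrow> 'i \<Rightarrow> 'w \<Rightarrow> ennreal"
    by (simp add: nn_integral_suminf nn_integral_sum)
  show ?thesis
    unfolding swap[OF assms(2)] swap[OF assms(3)] ennreal_suminf_cmult[symmetric] sum_distrib_left
    by (intro suminf_le sum_mono le) auto
qed

lemma AE_summable_if_sampled_partial_sums_bounded:
  fixes M :: "'w measure" and Fk :: "nat \<Rightarrow> 'w measure"
    and I :: "nat \<Rightarrow> 'w \<Rightarrow> 'b::finite set" and H :: "nat \<Rightarrow> 'b \<Rightarrow> 'w \<Rightarrow> real"
  assumes "prob_space M" and sub: "\<And>k. subalgebra M (Fk k)"
    and H_meas: "\<And>k i. H k i \<in> borel_measurable (Fk k)" and H_nonneg: "\<And>k i w. 0 \<le> H k i w"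
    and I_meas: "\<And>k. I (Suc k) \<in> measurable (Fk (Suc k)) (count_space UNIV)"
    and p_pos: "\<And>i. 0 < p i"
    and sampling: "\<And>k i. AE w in M.
        p i \<le> real_cond_exp M (Fk k) (indicator {w \<in> space M. i \<in> I (Suc k) w}) w"
    and bounded: "\<And>w n. w \<in> space M \<Longrightarrow> (\<Sum>k<n. \<Sum>i\<in>I (Suc k) w. H k i w) \<le> B"
  shows "AE w in M. summable (\<lambda>k. \<Sum>i\<in>UNIV. H k i w)"
proof -
  interpret prob_space M by fact
  define A where "A k i = {w \<in> space M. i \<in> I (Suc k) w}" for k i
  have A_sets[measurable]: "A k i \<in> sets M" for k i
  proof -
    have "I (Suc k) -` {S. i \<in> S} \<inter> space (Fk (Suc k)) \<in> sets (Fk (Suc k))"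
      by (rule measurable_sets[OF I_meas]) simp
    moreover have "I (Suc k) -` {S. i \<in> S} \<inter> space (Fk (Suc k)) = A k i"
      using sub[of "Suc k"] by (auto simp: A_def subalgebra_def)
    ultimately show ?thesis
      using sub[of "Suc k"] by (auto simp: subalgebra_def)
  qed
  have [measurable]: "H k i \<in> borel_measurable M" for k i
    by (rule measurable_from_subalg[OF sub H_meas])
  define p_min where "p_min = Min (range p)"
  have "0 < p_min"
    unfolding p_min_def by (subst Min_gr_iff) (auto simp: p_pos)
  define S where "S w = (\<Sum>k. \<Sum>i\<in>UNIV. ennreal (H k i w))" for w
  have sampled_le_B: "(\<Sum>k. \<Sum>i\<in>UNIV. ennreal (H k i w) * indicator (A k i) w) \<le> ennreal B"
    if w: "w \<in> space M" for w
  proof -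
    have "(\<Sum>i\<in>UNIV. ennreal (H k i w) * indicator (A k i) w) = ennreal (\<Sum>i\<in>I (Suc k) w. H k i w)" for k
      using w H_nonneg
      by (simp add: A_def indicator_def if_distrib[of "\<lambda>t. _ * t"] sum.If_cases sum_ennreal)
    moreover have "(\<Sum>k<n. ennreal (\<Sum>i\<in>I (Suc k) w. H k i w)) \<le> ennreal B" for n
      using bounded[OF w] H_nonneg by (simp add: sum_ennreal sum_nonneg ennreal_leI)
    ultimately show ?thesis
      by (simp add: suminf_eq_SUP SUP_least)
  qed
  have "ennreal p_min * integral\<^sup>N M S
      \<le> (\<integral>\<^sup>+ w. (\<Sum>k. \<Sum>i\<in>UNIV. ennreal (H k i w) * indicator (A k i) w) \<partial>M)"
    unfolding S_def
  proof (rule suminf_sum_nn_integral_cmult_le)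
    fix k i
    have "ennreal p_min * (\<integral>\<^sup>+ w. ennreal (H k i w) \<partial>M) \<le> ennreal (p i) * (\<integral>\<^sup>+ w. ennreal (H k i w) \<partial>M)"
      by (intro mult_right_mono ennreal_leI) (auto simp: p_min_def)
    also have "\<dots> \<le> (\<integral>\<^sup>+ w. ennreal (H k i w) * indicator (A k i) w \<partial>M)"
      using sampling p_pos A_sets
      by (intro nn_integral_cmult_le_cond_prob[OF \<open>prob_space M\<close> sub H_meas]) (auto simp: A_def)
    finally show "ennreal p_min * integral\<^sup>N M (\<lambda>w. ennreal (H k i w))
        \<le> integral\<^sup>N M (\<lambda>w. ennreal (H k i w) * indicator (A k i) w)" .
  qed auto
  also have "\<dots> \<le> ennreal B"
    using sampled_le_B by (intro nn_integral_le_const) auto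
  finally have "integral\<^sup>N M S \<noteq> \<infinity>"
    using \<open>0 < p_min\<close> by (auto simp: ennreal_mult_eq_top_iff top_unique)
  then have "AE w in M. S w \<noteq> \<infinity>"
    by (intro nn_integral_PInf_AE) (simp add: S_def[abs_def])
  then show ?thesis
    by eventually_elim (auto simp: S_def H_nonneg sum_nonneg sum_ennreal intro: summable_suminf_not_top)
qed

lemma (in block_fb) AE_summable_residuals:
  fixes M :: "'w measure" and Fk :: "nat \<Rightarrow> 'w measure"
    and x z :: "nat \<Rightarrow> 'w \<Rightarrow> real^'n" and I :: "nat \<Rightarrow> 'w \<Rightarrow> 'b set"
  assumes "prob_space M" and Fk_sub: "\<And>k. subalgebra M (Fk k)"
    and x_meas: "\<And>k. x k \<in> borel_measurable (Fk k)" and z_meas: "\<And>k. z k \<in> borel_measurable (Fk k)"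
    and I_meas: "\<And>k. I (Suc k) \<in> measurable (Fk (Suc k)) (count_space UNIV)"
    and x_init: "\<And>w. x 0 w = x0"
    and run: "\<And>w. w \<in> space M \<Longrightarrow> bc_run blk f g L G gam (\<lambda>k. x k w) (\<lambda>k. z k w) (\<lambda>k. I k w) y0"
    and p_pos: "\<And>i. 0 < p i"
    and sampling: "\<And>k i. AE w in M.
        p i \<le> real_cond_exp M (Fk k) (indicator {w \<in> space M. i \<in> I (Suc k) w}) w"
  shows "AE w in M. summable (\<lambda>k. (norm (x k w - z k w))\<^sup>2)"
proof -
  define H where "H k i w = (norm (blk_proj blk i (z k w - x k w)))\<^sup>2" for k i w
  have [measurable]: "blk_proj blk i \<in> borel_measurable borel" for i
    using linear_blk_proj[THEN linear_conv_bounded_linear[THEN iffD1]]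
    by (intro borel_measurable_continuous_onI linear_continuous_on)
  have H_meas: "H k i \<in> borel_measurable (Fk k)" for k i
    using x_meas[of k] z_meas[of k] unfolding H_def by measurable
  have H_nonneg: "0 \<le> H k i w" for k i w
    by (simp add: H_def)
  have bounded: "(\<Sum>k<n. \<Sum>i\<in>I (Suc k) w. H k i w)
      \<le> (real_of_ereal (FB_env x0) - real_of_ereal (Phi y0)) / decrease_const"
    if "w \<in> space M" for w n
  proof -
    interpret bc_run blk f g L G gam "\<lambda>k. x k w" "\<lambda>k. z k w" "\<lambda>k. I k w" y0
      by (rule run[OF that])
    show ?thesis
      using sum_progress_le[of n] FBE_eq_env[of 0] decrease_const_pos
      by (simp add: H_def progress_def Phi_min_def x_init field_simps)
  qed
  have "AE w in M. summable (\<lambda>k. \<Sum>i\<in>UNIV. H k i w)"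
    by (rule AE_summable_if_sampled_partial_sums_bounded[OF \<open>prob_space M\<close> Fk_sub H_meas H_nonneg
          I_meas p_pos sampling bounded])
  then show ?thesis
    by eventually_elim (simp add: H_def sum_power2_norm_blk_proj_UNIV norm_minus_commute)
qed

theorem theorem2p6:
  fixes blk :: "'n::finite \<Rightarrow> 'b::finite"
    and f :: "'b \<Rightarrow> real^'n \<Rightarrow> real"
    and g :: "'b \<Rightarrow> real^'n \<Rightarrow> real^'n"
    and L gam p :: "'b \<Rightarrow> real"
    and G :: "real^'n \<Rightarrow> ereal"
    and M :: "'w measure"
    and Fk :: "nat \<Rightarrow> 'w measure"
    and x z :: "nat \<Rightarrow> 'w \<Rightarrow> real^'n"
    and I :: "nat \<Rightarrow> 'w \<Rightarrow> 'b set"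
    and x0 :: "real^'n"
  defines "Phi \<equiv> (\<lambda>y. ereal (Fsep f y) + G y)"
  assumes f_block: "\<And>i u v. blk_proj blk i u = blk_proj blk i v \<Longrightarrow> f i u = f i v"
    and f_grad: "\<And>i u. GDERIV (f i) u :> g i u"
    and L_nonneg: "\<And>i. 0 \<le> L i"
    and f_Lip: "\<And>i u v. norm (g i u - g i v) \<le> L i * norm (blk_proj blk i u - blk_proj blk i v)"
    and G_proper: "(\<forall>y. G y \<noteq> -\<infinity>) \<and> (\<exists>y. G y \<noteq> \<infinity>)"
    and G_lsc: "lsc G"
    and argmin_ne: "\<exists>y. \<forall>u. Phi y \<le> Phi u"
    and gam_pos: "\<And>i. 0 < gam i"
    and gam_bound: "\<And>i. gam i * L i < real CARD('b)"
    and M_prob: "prob_space M"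
    and Fk_sub: "\<And>k. subalgebra M (Fk k)"
    and Fk_mono: "\<And>k. sets (Fk k) \<subseteq> sets (Fk (Suc k))"
    and x_meas: "\<And>k. x k \<in> borel_measurable (Fk k)"
    and z_meas: "\<And>k. z k \<in> borel_measurable (Fk k)"
    and I_meas: "\<And>k. I (Suc k) \<in> measurable (Fk (Suc k)) (count_space UNIV)"
    and x_init: "\<And>w. x 0 w = x0"
    and z_in_T: "\<And>k w. w \<in> space M \<Longrightarrow> z k w \<in> Tmap g G blk gam (x k w)"
    and x_update: "\<And>k w j. w \<in> space M \<Longrightarrow>
        x (Suc k) w $ j = (if blk j \<in> I (Suc k) w then z k w $ j else x k w $ j)"
    and p_pos: "\<And>i. 0 < p i"
    and sampling: "\<And>k i. AE w in M.
        p i \<le> real_cond_exp M (Fk k) (indicator {w \<in> space M. i \<in> I (Suc k) w}) w"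
  shows "AE w in M.
      summable (\<lambda>k. (norm (x k w - z k w))\<^sup>2)
    \<and> (\<lambda>k. norm (x k w - z k w)) \<longlonglongrightarrow> 0
    \<and> (\<exists>Phi_star :: real.
          (\<lambda>k. FBE f g G blk gam (x k w)) \<longlonglongrightarrow> ereal Phi_star
        \<and> (INF y. Phi y) \<le> ereal Phi_star
        \<and> (\<lambda>k. Phi (z k w)) \<longlonglongrightarrow> ereal Phi_star
        \<and> cluster_points (\<lambda>k. x k w) = cluster_points (\<lambda>k. z k w)
        \<and> (\<forall>xs \<in> cluster_points (\<lambda>k. x k w).
             0 \<in> frechet_subdiff Phi xs
           \<and> Phi xs = FBE f g G blk gam xs
           \<and> FBE f g G blk gam xs = ereal Phi_star))"
proof -
  interpret fb: block_fb blk f g L G gam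
    using f_block f_grad L_nonneg f_Lip G_proper G_lsc gam_pos gam_bound by unfold_locales
  have Phi_eq: "fb.Phi = Phi"
    by (simp add: fun_eq_iff fb.Phi_def Phi_def)
  obtain y0 where y0: "\<And>u. fb.Phi y0 \<le> fb.Phi u"
    using argmin_ne by (auto simp: Phi_eq)
  have run: "bc_run blk f g L G gam (\<lambda>k. x k w) (\<lambda>k. z k w) (\<lambda>k. I k w) y0" if "w \<in> space M" for w
    by unfold_locales (use z_in_T[OF that] x_update[OF that] y0 in auto)
  have "AE w in M. summable (\<lambda>k. (norm (x k w - z k w))\<^sup>2)"
    by (rule fb.AE_summable_residuals[OF M_prob Fk_sub x_meas z_meas I_meas x_init run p_pos sampling])
  with AE_space show ?thesis
  proof eventually_elim
    case (elim w)
    interpret bc_run blk f g L G gam "\<lambda>k. x k w" "\<lambda>k. z k w" "\<lambda>k. I k w" y0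
      by (rule run[OF elim(1)])
    show ?case
      using elim(2) convergence_of_summable_residuals[OF elim(2)] unfolding Phi_eq by simp
  qed
qed

end
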